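(* Let $t$ be odd with $1\le t\le k-1$, let $N$ be a positive multiple of $2^t$, $\lambda=N/2^t$, and let $p_{\max}$ be an integer with $\lambda/2^{k-t}<p_{\max}\le\lambda$. Then none of $R_1,\dots,R_k$ belongs to $G(k,2,t)^{\rm LP}$.
   Context: Variables $x_z$ are indexed by $z\in\{-1,1\}^k$. The LP relaxation of ILP (OA) for $s=2$ is: minimize $\sum_zx_z$ s.t. for each $t$-subset $J\subseteq\{1,\dots,k\}$ and each $u\in\{-1,1\}^J$, $\sum_{z:\ z_j=u_j\ \forall j\in J}x_z=\lambda$, and $0\le x_z\le p_{\max}$. With feasible set $\mathcal F$, $G(k,2,t)^{\rm LP}$ is the set of permutations $\pi$ of $\{-1,1\}^k$ with $\pi(x)\in\mathcal F$ and equal objective value for all $x\in\mathcal F$, where $\pi(x)_{\pi(z)}=x_z$. For $i\in\{1,\dots,k\}$, $R_i$ is the permutation of $\{-1,1\}^k$ given by $R_i(z_1,\dots,z_k)=(z_1z_i,\dots,z_{i-1}z_i,z_i,z_{i+1}z_i,\dots,z_kz_i)$. *)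

theory Defs
  imports Complex_Main
begin

text \<open>Points of the cube {-1,1}^k are lists of length k with entries in {-1,1};
  coordinate j (1-based, 1 <= j <= k) of z is z ! (j - 1).\<close>

definition cube :: "nat \<Rightarrow> int list set" where
  "cube k = {z. length z = k \<and> set z \<subseteq> {-1, 1}}"

definition lp_feasible :: "nat \<Rightarrow> nat \<Rightarrow> real \<Rightarrow> real \<Rightarrow> (int list \<Rightarrow> real) set" where
  "lp_feasible k t lam pmax =
     {x. (\<forall>z. z \<notin> cube k \<longrightarrow> x z = 0)
       \<and> (\<forall>J u. J \<subseteq> {1..k} \<longrightarrow> card J = t \<longrightarrow> (\<forall>j\<in>J. u j \<in> {-1, 1::int}) \<longrightarrow>
              (\<Sum>z\<in>{z \<in> cube k. \<forall>j\<in>J. z ! (j - 1) = u j}. x z) = lam)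
       \<and> (\<forall>z\<in>cube k. 0 \<le> x z \<and> x z \<le> pmax)}"

definition lp_obj :: "nat \<Rightarrow> (int list \<Rightarrow> real) \<Rightarrow> real" where
  "lp_obj k x = (\<Sum>z\<in>cube k. x z)"

definition perm_act :: "nat \<Rightarrow> (int list \<Rightarrow> int list) \<Rightarrow> (int list \<Rightarrow> real) \<Rightarrow> (int list \<Rightarrow> real)" where
  "perm_act k \<pi> x = (\<lambda>w. if w \<in> cube k then x (inv_into (cube k) \<pi> w) else 0)"

text \<open>G(k,2,t)^LP (a permutation is identified by its action on the cube).\<close>
definition G_LP :: "nat \<Rightarrow> nat \<Rightarrow> real \<Rightarrow> real \<Rightarrow> (int list \<Rightarrow> int list) set" where
  "G_LP k t lam pmax =
     {\<pi>. bij_betw \<pi> (cube k) (cube k) \<and>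
          (\<forall>x\<in>lp_feasible k t lam pmax.
              perm_act k \<pi> x \<in> lp_feasible k t lam pmax \<and>
              lp_obj k (perm_act k \<pi> x) = lp_obj k x)}"

text \<open>R_i (1-based i): z_j \<mapsto> z_j z_i for j \<noteq> i, and z_i unchanged.\<close>
definition R :: "nat \<Rightarrow> int list \<Rightarrow> int list" where
  "R i z = (map (\<lambda>a. a * z ! (i - 1)) z)[i - 1 := z ! (i - 1)]"

end

(* With a = lambda / 2^(k-t) and a small b > 0, the point x = a + b chi_S, where
   chi_S(z) = prod_{j in S} z_j and S = {i} u T for a t-set T not containing i, is feasible:
   a character on t + 1 coordinates sums to zero over every t-slice, so each slice sums to
   2^(k-t) a = lambda.  Since t is odd, chi_S o R_i = chi_T, so R_i maps x to a + b chi_T,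
   whose sum over the slice {z_j = 1 for j in T} is 2^(k-t) (a + b) <> lambda. *)

theory Submission
  imports Defs
begin

definition slice :: "nat \<Rightarrow> nat set \<Rightarrow> (nat \<Rightarrow> int) \<Rightarrow> int list set" where
  "slice k J u = {z \<in> cube k. \<forall>j\<in>J. z ! (j - 1) = u j}"

lemma cube_nth: "z \<in> cube k \<Longrightarrow> n < k \<Longrightarrow> z ! n \<in> {-1, 1}"
  unfolding cube_def by (auto dest!: nth_mem)

lemma cube_nth_square: "z \<in> cube k \<Longrightarrow> n < k \<Longrightarrow> z ! n * z ! n = 1"
  using cube_nth by fastforce

lemma cube_0: "cube 0 = {[]}"
  by (auto simp: cube_def)

lemma snoc_in_cube_Suc_iff: "y @ [c] \<in> cube (Suc k) \<longleftrightarrow> y \<in> cube k \<and> c \<in> {-1, 1}"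
  by (auto simp: cube_def)

lemma slice_Suc:
  assumes "J \<subseteq> {1..Suc k}" and "\<forall>j\<in>J. u j \<in> {-1, 1}"
  shows "slice (Suc k) J u = (\<lambda>(y, c). y @ [c]) `
           (slice k (J - {Suc k}) u \<times> (if Suc k \<in> J then {u (Suc k)} else {-1, 1}))"
    (is "_ = ?f ` (_ \<times> ?C)")
proof (intro equalityI subsetI)
  fix z assume z: "z \<in> slice (Suc k) J u"
  then have "length z = Suc k" by (simp add: slice_def cube_def)
  then obtain y c where zyc: "z = y @ [c]" and ly: "length y = k"
    by (metis append_butlast_last_id length_butlast diff_Suc_1 list.size(3) nat.distinct(1))
  show "z \<in> ?f ` (slice k (J - {Suc k}) u \<times> ?C)"
  proof (rule image_eqI)
    show "z = ?f (y, c)" using zyc by simp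
    have "y ! (j - 1) = u j" if "j \<in> J - {Suc k}" for j
    proof -
      have "j - 1 < k" using that assms(1) by force
      then show ?thesis using z that ly by (force simp: zyc slice_def nth_append)
    qed
    moreover have "c \<in> ?C"
      using z ly cube_nth[of z "Suc k" k] by (auto simp: zyc slice_def)
    ultimately show "(y, c) \<in> slice k (J - {Suc k}) u \<times> ?C"
      using z by (auto simp: zyc slice_def snoc_in_cube_Suc_iff)
  qed
next
  fix z assume "z \<in> ?f ` (slice k (J - {Suc k}) u \<times> ?C)"
  then obtain y c where z: "z = y @ [c]" and y: "y \<in> slice k (J - {Suc k}) u" and c: "c \<in> ?C"
    by auto
  have ly: "length y = k" using y by (simp add: slice_def cube_def)
  have "\<forall>j\<in>J - {Suc k}. j - 1 < k" using assms(1) by force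
  then show "z \<in> slice (Suc k) J u"
    using y c assms ly by (auto simp: z slice_def snoc_in_cube_Suc_iff nth_append split: if_splits)
qed

lemma card_slice:
  assumes "J \<subseteq> {1..k}" and "\<forall>j\<in>J. u j \<in> {-1, 1}"
  shows "card (slice k J u) = 2 ^ (k - card J)"
  using assms
proof (induction k arbitrary: J)
  case 0
  then show ?case by (simp add: slice_def cube_0)
next
  case (Suc k)
  let ?C = "if Suc k \<in> J then {u (Suc k)} else {-1, 1 :: int}"
  have finJ: "finite J" using Suc.prems(1) finite_subset by blast
  have IH: "card (slice k (J - {Suc k}) u) = 2 ^ (k - card (J - {Suc k}))"
    using Suc.prems by (intro Suc.IH) auto
  have "inj_on (\<lambda>(y, c). y @ [c]) (slice k (J - {Suc k}) u \<times> ?C)"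
    by (auto simp: inj_on_def)
  then have "card (slice (Suc k) J u) = card (slice k (J - {Suc k}) u) * card ?C"
    by (simp add: slice_Suc[OF Suc.prems] card_image card_cartesian_product)
  also have "\<dots> = 2 ^ (Suc k - card J)"
  proof (cases "Suc k \<in> J")
    case True
    then have "card J \<ge> 1" using finJ by (metis card_0_eq empty_iff less_one not_le)
    then show ?thesis using True finJ IH by simp
  next
    case False
    then have "J \<subseteq> {1..k}" using Suc.prems(1) by (auto simp: le_Suc_eq subset_iff)
    then have "card J \<le> k" using card_mono[of "{1..k}" J] by simp
    then show ?thesis using False IH by (simp add: Suc_diff_le)
  qed
  finally show ?case .
qed

definition chi :: "nat set \<Rightarrow> int list \<Rightarrow> int" where
  "chi S z = (\<Prod>j\<in>S. z ! (j - 1))"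

lemma chi_in_cube_values:
  assumes "S \<subseteq> {1..k}" and "z \<in> cube k"
  shows "chi S z \<in> {-1, 1}"
proof -
  have "z ! (j - 1) * z ! (j - 1) = 1" if "j \<in> S" for j
    using that assms cube_nth_square[of z k "j - 1"] by force
  then have "chi S z * chi S z = 1" by (simp add: chi_def prod.distrib[symmetric])
  then show ?thesis by (auto simp: zmult_eq_1_iff)
qed

definition flip :: "nat \<Rightarrow> int list \<Rightarrow> int list" where
  "flip m z = z[m - 1 := - z ! (m - 1)]"

lemma flip_flip [simp]: "flip m (flip m z) = z"
  by (cases "m - 1 < length z") (simp_all add: flip_def list_update_beyond)

lemma flip_in_slice:
  assumes "J \<subseteq> {1..k}" and "m \<in> {1..k}" and "m \<notin> J" and "z \<in> slice k J u"
  shows "flip m z \<in> slice k J u"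
proof -
  have "- z ! (m - 1) \<in> {-1, 1}" using assms cube_nth[of z k "m - 1"] by (auto simp: slice_def)
  then have "flip m z \<in> cube k"
    using assms(4) set_update_subset_insert[of z "m - 1" "- z ! (m - 1)"]
    by (auto simp: flip_def slice_def cube_def)
  moreover have "m - 1 \<noteq> j - 1" if "j \<in> J" for j
    using that assms(1-3) by (metis atLeastAtMost_iff eq_diff_iff subsetD)
  ultimately show ?thesis using assms(4) by (auto simp: slice_def flip_def)
qed

lemma chi_flip:
  assumes "S \<subseteq> {1..k}" and "m \<in> S" and "z \<in> cube k"
  shows "chi S (flip m z) = - chi S z"
proof -
  have fin: "finite S" using assms(1) finite_subset by blast
  have m: "m - 1 < length z" using assms by (force simp: cube_def)
  have "(\<Prod>j\<in>S - {m}. flip m z ! (j - 1)) = (\<Prod>j\<in>S - {m}. z ! (j - 1))"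
  proof (rule prod.cong)
    fix j assume "j \<in> S - {m}"
    then have "j - 1 \<noteq> m - 1"
      using assms(1,2) by (metis DiffE atLeastAtMost_iff eq_diff_iff insertI1 subsetD)
    then show "flip m z ! (j - 1) = z ! (j - 1)" by (simp add: flip_def)
  qed simp
  moreover have "flip m z ! (m - 1) = - z ! (m - 1)" using m by (simp add: flip_def)
  ultimately show ?thesis
    using fin assms(2) by (simp add: chi_def prod.remove)
qed

text \<open>Flipping a coordinate of S outside J is an involution of the slice that negates chi S.\<close>
lemma sum_chi_slice_eq_0:
  assumes "S \<subseteq> {1..k}" and "J \<subseteq> {1..k}" and "\<not> S \<subseteq> J"
  shows "(\<Sum>z\<in>slice k J u. chi S z) = 0"
proof -
  obtain m where m: "m \<in> S" "m \<notin> J" using assms(3) by blast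
  then have "m \<in> {1..k}" using assms(1) by blast
  have "(\<Sum>z\<in>slice k J u. chi S z) = (\<Sum>z\<in>slice k J u. chi S (flip m z))"
    using assms(1,2) m
    by (intro sum.reindex_bij_witness[where i = "flip m" and j = "flip m"])
       (auto intro: flip_in_slice[OF assms(2) \<open>m \<in> {1..k}\<close>])
  also have "\<dots> = - (\<Sum>z\<in>slice k J u. chi S z)"
    using assms(1) m by (simp add: chi_flip slice_def sum_negf)
  finally show ?thesis by simp
qed

lemma length_R [simp]: "length (R i z) = length z"
  by (simp add: R_def)

lemma R_nth:
  assumes "n < length z" and "i - 1 < length z"
  shows "R i z ! n = (if n = i - 1 then z ! (i - 1) else z ! n * z ! (i - 1))"
  using assms by (simp add: R_def)

lemma R_in_cube:
  assumes "i \<in> {1..k}" and "z \<in> cube k"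
  shows "R i z \<in> cube k"
proof -
  have lz: "length z = k" and i: "i - 1 < k" using assms by (auto simp: cube_def)
  have "R i z ! n \<in> {-1, 1}" if "n < k" for n
    using that i lz R_nth[of n z i] cube_nth[OF assms(2) that] cube_nth[OF assms(2) i] by auto
  then show ?thesis using lz by (fastforce simp: cube_def in_set_conv_nth)
qed

lemma R_R:
  assumes "i \<in> {1..k}" and "z \<in> cube k"
  shows "R i (R i z) = z"
proof (rule nth_equalityI)
  have lz: "length z = k" and i: "i - 1 < k" using assms by (auto simp: cube_def)
  show "length (R i (R i z)) = length z" by simp
  fix n assume "n < length (R i (R i z))"
  then have "n < k" by (simp add: lz)
  then show "R i (R i z) ! n = z ! n"
    using i lz cube_nth_square[OF assms(2) i] by (simp add: R_nth mult.assoc)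
qed

lemma chi_R:
  assumes "T \<subseteq> {1..k}" and "i \<in> {1..k}" and "i \<notin> T" and "w \<in> cube k"
  shows "chi T (R i w) = chi T w * w ! (i - 1) ^ card T"
proof -
  have "R i w ! (j - 1) = w ! (j - 1) * w ! (i - 1)" if "j \<in> T" for j
  proof -
    have "j - 1 \<noteq> i - 1" using that assms(1-3) by (metis atLeastAtMost_iff eq_diff_iff subsetD)
    moreover have "j - 1 < length w" "i - 1 < length w"
      using that assms by (force simp: cube_def)+
    ultimately show ?thesis by (simp add: R_nth)
  qed
  then show ?thesis by (simp add: chi_def prod.distrib)
qed

text \<open>This is where the parity of t enters: w_i^(t+1) = 1.\<close>
lemma chi_insert_R:
  assumes "T \<subseteq> {1..k}" and "i \<in> {1..k}" and "i \<notin> T" and "odd (card T)"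
    and "w \<in> cube k"
  shows "chi (insert i T) (R i w) = chi T w"
proof -
  have fin: "finite T" using assms(1) finite_subset by blast
  have i: "i - 1 < k" and lw: "length w = k" using assms(2,5) by (auto simp: cube_def)
  have "chi (insert i T) (R i w) = w ! (i - 1) * chi T (R i w)"
    using fin assms(3) i lw by (simp add: chi_def R_nth)
  also have "\<dots> = chi T w * w ! (i - 1) ^ Suc (card T)"
    by (simp add: chi_R[OF assms(1-3,5)])
  also have "w ! (i - 1) ^ Suc (card T) = 1"
  proof -
    have "even (Suc (card T))" using assms(4) by simp
    then obtain q where "Suc (card T) = 2 * q" by (rule evenE)
    moreover have "w ! (i - 1) ^ 2 = 1"
      using cube_nth_square[OF assms(5) i] by (simp add: power2_eq_square)
    ultimately show ?thesis by (simp add: power_mult)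
  qed
  finally show ?thesis by simp
qed

lemma perm_act_involution:
  assumes "\<forall>z\<in>cube k. \<sigma> z \<in> cube k \<and> \<sigma> (\<sigma> z) = z" and "w \<in> cube k"
  shows "perm_act k \<sigma> x w = x (\<sigma> w)"
proof -
  have "inj_on \<sigma> (cube k)" using assms(1) by (metis inj_onI)
  then have "inv_into (cube k) \<sigma> w = \<sigma> w" using assms by (intro inv_into_f_eq) auto
  then show ?thesis using assms(2) by (simp add: perm_act_def)
qed

lemma sum_slice_lp_feasible:
  assumes "x \<in> lp_feasible k t lam pmax"
    and "J \<subseteq> {1..k}" and "card J = t" and "\<forall>j\<in>J. u j \<in> {-1, 1}"
  shows "(\<Sum>z\<in>slice k J u. x z) = lam"
  using assms by (simp add: lp_feasible_def slice_def)

definition char_perturbation :: "nat \<Rightarrow> real \<Rightarrow> real \<Rightarrow> nat set \<Rightarrow> int list \<Rightarrow> real" where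
  "char_perturbation k a b S z = (if z \<in> cube k then a + b * chi S z else 0)"

lemma char_perturbation_feasible:
  assumes "S \<subseteq> {1..k}" and "t < card S" and "0 \<le> b" and "b \<le> a" and "a + b \<le> pmax"
  shows "char_perturbation k a b S \<in> lp_feasible k t (2 ^ (k - t) * a) pmax"
  unfolding lp_feasible_def
proof (intro CollectI conjI allI impI ballI)
  fix z assume "z \<notin> cube k"
  then show "char_perturbation k a b S z = 0" by (simp add: char_perturbation_def)
next
  fix J u assume J: "J \<subseteq> {1..k}" "card J = t" and u: "\<forall>j\<in>J. u j \<in> {-1, 1::int}"
  have "\<not> S \<subseteq> J" using J assms(2) card_mono[of J S] finite_subset[OF J(1)] by auto
  then have "(\<Sum>z\<in>slice k J u. real_of_int (chi S z)) = 0"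
    using sum_chi_slice_eq_0[OF assms(1) J(1)] by (metis of_int_0 of_int_sum)
  then have "(\<Sum>z\<in>slice k J u. char_perturbation k a b S z) = card (slice k J u) * a"
    by (simp add: char_perturbation_def slice_def sum.distrib sum_distrib_left[symmetric])
  then show "(\<Sum>z\<in>{z \<in> cube k. \<forall>j\<in>J. z ! (j - 1) = u j}. char_perturbation k a b S z)
      = 2 ^ (k - t) * a"
    using card_slice[OF J(1) u] J(2) by (simp add: slice_def)
next
  fix z assume "z \<in> cube k"
  then have "char_perturbation k a b S z \<in> {a - b, a + b}"
    using chi_in_cube_values[OF assms(1)] by (force simp: char_perturbation_def)
  then show "0 \<le> char_perturbation k a b S z" "char_perturbation k a b S z \<le> pmax"
    using assms(3-5) by auto
qed

lemma perm_act_R_char_perturbation: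
  assumes "T \<subseteq> {1..k}" and "i \<in> {1..k}" and "i \<notin> T" and "odd (card T)"
    and "w \<in> cube k"
  shows "perm_act k (R i) (char_perturbation k a b (insert i T)) w = a + b * chi T w"
proof -
  have "\<forall>z\<in>cube k. R i z \<in> cube k \<and> R i (R i z) = z"
    using assms(2) R_in_cube R_R by blast
  then show ?thesis
    using assms R_in_cube[OF assms(2,5)]
    by (simp add: perm_act_involution char_perturbation_def chi_insert_R)
qed

theorem lemma10:
  fixes k t N :: nat and pmax :: int
  assumes "odd t" and "1 \<le> t" and "t \<le> k - 1"
    and "N > 0" and "2 ^ t dvd N"
    and "real N / 2 ^ t / 2 ^ (k - t) < real_of_int pmax"
    and "real_of_int pmax \<le> real N / 2 ^ t"
  shows "\<forall>i\<in>{1..k}. R i \<notin> G_LP k t (real N / 2 ^ t) (real_of_int pmax)"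
proof (intro ballI notI)
  fix i assume i: "i \<in> {1..k}" and G: "R i \<in> G_LP k t (real N / 2 ^ t) (real_of_int pmax)"
  define a where "a = real N / 2 ^ t / 2 ^ (k - t)"
  define b where "b = min a (pmax - a)"
  have b: "0 < b" "b \<le> a" "a + b \<le> pmax" using assms(4,6) by (auto simp: a_def b_def)
  have lam: "real N / 2 ^ t = 2 ^ (k - t) * a" by (simp add: a_def)
  have "t \<le> card ({1..k} - {i})" using i assms(3) by simp
  then obtain T where T: "T \<subseteq> {1..k} - {i}" "card T = t"
    by (meson obtain_subset_with_card_n)
  then have Tk: "T \<subseteq> {1..k}" "i \<notin> T" "finite T" using finite_subset[of T "{1..k}"] by auto
  let ?x = "char_perturbation k a b (insert i T)"
  have "?x \<in> lp_feasible k t (real N / 2 ^ t) pmax"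
    using Tk T(2) i b by (simp add: lam char_perturbation_feasible)
  then have "perm_act k (R i) ?x \<in> lp_feasible k t (real N / 2 ^ t) pmax"
    using G by (simp add: G_LP_def)
  then have "(\<Sum>w\<in>slice k T (\<lambda>_. 1). perm_act k (R i) ?x w) = 2 ^ (k - t) * a"
    using T(2) Tk(1) by (simp add: lam sum_slice_lp_feasible)
  moreover have "(\<Sum>w\<in>slice k T (\<lambda>_. 1). perm_act k (R i) ?x w) = 2 ^ (k - t) * (a + b)"
    using T(2) Tk i assms(1) card_slice[of T k "\<lambda>_. 1"]
    by (simp add: perm_act_R_char_perturbation slice_def chi_def)
  ultimately show False using b(1) by simp
qed

end
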